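(* Let $t\in\mathbb{R}$, $r_t=\mu e^{-t}$ and $R_t=\lceil r_t\rceil$. Then $$0\le\frac{\operatorname{li}(e^tR_t)}{e^t}<\frac{\operatorname{li}(\mu+e^t)}{e^t}<\frac{1}{\log\mu}$$ and $$0\le\frac{R_t-r_t}{t+\log R_t}\le\frac{R_t-r_t}{t+\log\frac{R_t+r_t}{2}}\le\frac{\operatorname{li}(e^tR_t)}{e^t}\le\frac{R_t-r_t}{\log\mu}<\frac{1}{\log\mu}.$$
   Context: $\operatorname{li}(x)=\int_0^x\frac{du}{\log u}$ (principal value) is the logarithmic integral; $\mu=1.451369\ldots$ is the Ramanujan–Soldner constant, the unique positive zero of $\operatorname{li}$. *)

theory Defs
  imports "HOL-Analysis.Analysis"
begin

text \<open>Logarithmic integral as a Cauchy principal value: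
  for 0 <= x < 1 an ordinary (improper at 0, but bounded) integral;
  for x > 1 the principal value around the singularity at u = 1.
  The value at x = 1 (where li = -infinity) is irrelevant.\<close>
definition li :: "real \<Rightarrow> real" where
  "li x = (if x < 1 then integral {0..x} (\<lambda>u. 1 / ln u)
           else Lim (at_right 0)
             (\<lambda>\<epsilon>. integral {0..1-\<epsilon>} (\<lambda>u. 1 / ln u) + integral {1+\<epsilon>..x} (\<lambda>u. 1 / ln u)))"

text \<open>Ramanujan--Soldner constant: the unique positive zero of li (it lies in (1,2)).\<close>
definition soldner_mu :: real where
  "soldner_mu = (THE x. x > 1 \<and> li x = 0)"

end

theory Submission
  imports Defs
begin

text \<open>On \<open>(1, \<infinity>)\<close> the integrand \<open>1 / ln u\<close> is decreasing and convex, and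
  \<open>li x = \<integral>\<^sub>\<mu>\<^sup>x du / ln u\<close> for \<open>x \<ge> \<mu>\<close> because \<open>li \<mu> = 0\<close>. Since
  \<open>r\<^sub>t \<le> R\<^sub>t < r\<^sub>t + 1\<close>, the point \<open>X = e\<^sup>t R\<^sub>t\<close> lies in \<open>[\<mu>, \<mu> + e\<^sup>t)\<close> with
  \<open>X - \<mu> = e\<^sup>t (R\<^sub>t - r\<^sub>t)\<close>, so every bound compares \<open>\<integral>\<^sub>\<mu>\<^sup>X du / ln u\<close> with a
  rectangle: from above with the height at the left end point (monotonicity), from below
  with the height at the midpoint (convexity, Hermite--Hadamard).

  The principal value defining \<open>li\<close> is handled by subtracting \<open>1 / (u - 1)\<close>, which
  leaves an integrand with values in \<open>[0, 1]\<close>; this yields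
  \<open>li b - li a = \<integral>\<^sub>a\<^sup>b du / ln u\<close> on \<open>(1, \<infinity>)\<close> and the existence of \<open>\<mu>\<close>.\<close>

lemma recip_ln_between:
  fixes u :: real
  assumes "0 < u" "u \<noteq> 1"
  shows "1 / (u - 1) \<le> 1 / ln u" "1 / ln u \<le> u / (u - 1)"
proof -
  have upper: "ln u \<le> u - 1" using assms by (intro ln_le_minus_one)
  have "ln (1 / u) \<le> 1 / u - 1" using assms by (intro ln_le_minus_one) simp
  then have lower: "(u - 1) / u \<le> ln u" using assms by (simp add: ln_div field_simps)
  have "1 / (u - 1) \<le> 1 / ln u \<and> 1 / ln u \<le> u / (u - 1)"
  proof (cases "u < 1")
    case True
    then have "ln u < 0" using assms by simp
    then have "inverse (ln u) \<le> inverse ((u - 1) / u)" "inverse (u - 1) \<le> inverse (ln u)"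
      using upper lower True by (intro le_imp_inverse_le_neg; simp)+
    then show ?thesis by (simp add: inverse_eq_divide)
  next
    case False
    then have "0 < ln u" using assms by simp
    then have "inverse (ln u) \<le> inverse ((u - 1) / u)" "inverse (u - 1) \<le> inverse (ln u)"
      using upper lower False assms by (intro le_imp_inverse_le; simp)+
    then show ?thesis by (simp add: inverse_eq_divide)
  qed
  then show "1 / (u - 1) \<le> 1 / ln u" "1 / ln u \<le> u / (u - 1)" by auto
qed

text \<open>Subtracting \<open>1 / (u - 1)\<close> removes the pole of \<open>1 / ln u\<close> at \<open>u = 1\<close>;
  the junk value there is \<open>li_remainder 1 = 0\<close>.\<close>
definition li_remainder :: "real \<Rightarrow> real" where
  "li_remainder u = 1 / ln u - 1 / (u - 1)"

lemma li_remainder_bounds: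
  assumes "0 \<le> u"
  shows "0 \<le> li_remainder u" "li_remainder u \<le> 1"
proof -
  have "0 \<le> li_remainder u \<and> li_remainder u \<le> 1"
  proof (cases "u = 0 \<or> u = 1")
    case False
    then have "u / (u - 1) - 1 / (u - 1) = 1" by (simp add: divide_simps)
    then show ?thesis using recip_ln_between[of u] assms False
      unfolding li_remainder_def by fastforce
  qed (auto simp: li_remainder_def)
  then show "0 \<le> li_remainder u" "li_remainder u \<le> 1" by auto
qed

lemma li_remainder_integrable_away_from_1:
  assumes "0 \<le> a" "1 \<notin> {a<..<b}"
  shows "li_remainder integrable_on {a..b}"
proof -
  have "continuous_on {a<..<b} li_remainder"
    unfolding li_remainder_def using assms by (intro continuous_intros) auto
  then have "li_remainder \<in> borel_measurable (lebesgue_on {a<..<b})"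
    by (intro continuous_imp_measurable_on_sets_lebesgue) auto
  then have "li_remainder integrable_on {a<..<b}"
  proof (rule measurable_bounded_by_integrable_imp_integrable_real)
    show "\<bar>li_remainder x\<bar> \<le> 1" if "x \<in> {a<..<b}" for x
      using li_remainder_bounds[of x] that assms by auto
  qed (auto intro: integrable_on_const)
  then show ?thesis by (simp add: integrable_on_open_interval_real)
qed

lemma li_remainder_integrable:
  assumes "0 \<le> a"
  shows "li_remainder integrable_on {a..b}"
proof -
  have "li_remainder integrable_on {0..max 1 b}"
    by (rule Henstock_Kurzweil_Integration.integrable_combine[of 0 1])
       (auto intro: li_remainder_integrable_away_from_1)
  then show ?thesis
    by (rule integrable_subinterval_real) (use assms in auto)
qed

lemma li_remainder_integral_bounds:
  assumes "0 \<le> a" "a \<le> b"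
  shows "0 \<le> integral {a..b} li_remainder" "integral {a..b} li_remainder \<le> b - a"
proof -
  show "0 \<le> integral {a..b} li_remainder"
    using assms li_remainder_bounds by (intro integral_nonneg li_remainder_integrable) auto
  have "integral {a..b} li_remainder \<le> integral {a..b} (\<lambda>_. 1)"
    using assms li_remainder_bounds
    by (intro integral_le li_remainder_integrable integrable_const_ivl) auto
  then show "integral {a..b} li_remainder \<le> b - a" using assms by simp
qed

lemma has_integral_recip_ln_above_1:
  assumes "1 < a" "a \<le> b"
  shows "((\<lambda>u. 1 / ln u) has_integral
           integral {a..b} li_remainder + ln (b - 1) - ln (a - 1)) {a..b}"
proof -
  have "((\<lambda>u. 1 / (u - 1)) has_integral ln (b - 1) - ln (a - 1)) {a..b}"
  proof (rule fundamental_theorem_of_calculus[OF assms(2)])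
    fix x assume "x \<in> {a..b}"
    then have "1 < x" using assms by auto
    then show "((\<lambda>u. ln (u - 1)) has_vector_derivative 1 / (x - 1)) (at x within {a..b})"
      by (auto intro!: derivative_eq_intros
               simp: has_real_derivative_iff_has_vector_derivative[symmetric])
  qed
  from has_integral_add[OF integrable_integral[OF li_remainder_integrable] this]
  show ?thesis using assms by (simp add: li_remainder_def add_diff_eq)
qed

lemma has_integral_recip_ln_below_1:
  assumes "0 \<le> c" "c < 1"
  shows "((\<lambda>u. 1 / ln u) has_integral integral {0..c} li_remainder + ln (1 - c)) {0..c}"
proof -
  have "((\<lambda>u. 1 / (u - 1)) has_integral ln (1 - c) - ln (1 - 0)) {0..c}"
  proof (rule fundamental_theorem_of_calculus[OF assms(1)])
    fix x assume "x \<in> {0..c}"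
    then have "x < 1" using assms by auto
    then show "((\<lambda>u. ln (1 - u)) has_vector_derivative 1 / (x - 1)) (at x within {0..c})"
      by (auto intro!: derivative_eq_intros
               simp: has_real_derivative_iff_has_vector_derivative[symmetric] field_simps)
  qed
  from has_integral_add[OF integrable_integral[OF li_remainder_integrable] this]
  show ?thesis by (simp add: li_remainder_def)
qed

text \<open>The two \<open>ln \<epsilon>\<close> terms coming from \<open>1 / (u - 1)\<close> cancel, and the part of the
  bounded remainder missing on \<open>[1 - \<epsilon>, 1 + \<epsilon>]\<close> is at most \<open>2 \<epsilon>\<close>.\<close>
lemma recip_ln_truncated_integral_error:
  assumes "0 < \<epsilon>" "\<epsilon> < 1" "1 + \<epsilon> < x"
  shows "\<bar>integral {0..1 - \<epsilon>} (\<lambda>u. 1 / ln u) + integral {1 + \<epsilon>..x} (\<lambda>u. 1 / ln u)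
           - (integral {0..1} li_remainder + integral {1..x} li_remainder + ln (x - 1))\<bar>
         \<le> 2 * \<epsilon>"
proof -
  have "integral {0..1 - \<epsilon>} (\<lambda>u. 1 / ln u) = integral {0..1 - \<epsilon>} li_remainder + ln \<epsilon>"
    using has_integral_recip_ln_below_1[of "1 - \<epsilon>"] assms by (simp add: integral_unique)
  moreover have "integral {1 + \<epsilon>..x} (\<lambda>u. 1 / ln u)
                   = integral {1 + \<epsilon>..x} li_remainder + ln (x - 1) - ln \<epsilon>"
    using has_integral_recip_ln_above_1[of "1 + \<epsilon>" x] assms by (simp add: integral_unique)
  moreover have "integral {0..1 - \<epsilon>} li_remainder + integral {1 - \<epsilon>..1} li_remainder
                   = integral {0..1} li_remainder"
    using assms by (intro Henstock_Kurzweil_Integration.integral_combine li_remainder_integrable) auto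
  moreover have "integral {1..1 + \<epsilon>} li_remainder + integral {1 + \<epsilon>..x} li_remainder
                   = integral {1..x} li_remainder"
    using assms by (intro Henstock_Kurzweil_Integration.integral_combine li_remainder_integrable) auto
  moreover note li_remainder_integral_bounds[of "1 - \<epsilon>" 1]
    li_remainder_integral_bounds[of 1 "1 + \<epsilon>"]
  ultimately show ?thesis using assms by auto
qed

lemma li_eq_regularised:
  assumes "1 < x"
  shows "li x = integral {0..1} li_remainder + integral {1..x} li_remainder + ln (x - 1)"
    (is "_ = ?L")
proof -
  define F where "F \<epsilon> = integral {0..1 - \<epsilon>} (\<lambda>u. 1 / ln u)
                        + integral {1 + \<epsilon>..x} (\<lambda>u. 1 / ln u)" for \<epsilon>
  have close: "\<forall>\<^sub>F \<epsilon> in at_right 0. \<bar>F \<epsilon> - ?L\<bar> \<le> 2 * \<epsilon>"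
  proof -
    have "\<forall>\<^sub>F \<epsilon> in at_right 0. \<epsilon> \<in> {0<..<min 1 (x - 1)}"
      using assms by (intro eventually_at_right_real) auto
    then show ?thesis
      by eventually_elim (use recip_ln_truncated_integral_error in \<open>auto simp: F_def\<close>)
  qed
  have "(F \<longlongrightarrow> ?L) (at_right 0)"
  proof (rule tendsto_sandwich[of "\<lambda>\<epsilon>. ?L - 2 * \<epsilon>" _ _ "\<lambda>\<epsilon>. ?L + 2 * \<epsilon>"])
    show "\<forall>\<^sub>F \<epsilon> in at_right 0. ?L - 2 * \<epsilon> \<le> F \<epsilon>" "\<forall>\<^sub>F \<epsilon> in at_right 0. F \<epsilon> \<le> ?L + 2 * \<epsilon>"
      using close by (auto elim: eventually_mono)
  qed (auto intro!: tendsto_eq_intros)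
  then show ?thesis using assms unfolding li_def F_def by (simp add: tendsto_Lim)
qed

lemma li_diff_eq_integral:
  assumes "1 < a" "a \<le> b"
  shows "li b - li a = integral {a..b} (\<lambda>u. 1 / ln u)"
proof -
  have "integral {1..a} li_remainder + integral {a..b} li_remainder = integral {1..b} li_remainder"
    using assms by (intro Henstock_Kurzweil_Integration.integral_combine li_remainder_integrable) auto
  then show ?thesis
    using assms integral_unique[OF has_integral_recip_ln_above_1[OF assms]]
    by (simp add: li_eq_regularised)
qed

lemma antimono_on_integral_le:
  fixes f :: "real \<Rightarrow> real"
  assumes "antimono_on {a..b} f" "f integrable_on {a..b}" "a \<le> b"
  shows "integral {a..b} f \<le> (b - a) * f a"
proof -
  have "integral {a..b} f \<le> integral {a..b} (\<lambda>_. f a)"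
    using assms monotone_onD[OF assms(1), of a] by (intro integral_le) auto
  then show ?thesis using assms by simp
qed

lemma strict_antimono_on_integral_less:
  fixes f :: "real \<Rightarrow> real"
  assumes mono: "strict_antimono_on {a..b} f" and int: "f integrable_on {a..b}" and "a < b"
  shows "integral {a..b} f < (b - a) * f a"
proof -
  define m where "m = (a + b) / 2"
  have m: "a < m" "m < b" using \<open>a < b\<close> by (auto simp: m_def)
  have anti: "antimono_on {a..b} f"
    using mono by (simp add: strict_antimono_iff_antimono)
  have "integral {a..b} f = integral {a..m} f + integral {m..b} f"
    using m by (intro Henstock_Kurzweil_Integration.integral_combine[symmetric] int) auto
  also have "\<dots> \<le> (m - a) * f a + (b - m) * f m"
    using m by (intro add_mono antimono_on_integral_le integrable_subinterval_real[OF int]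
                      monotone_on_subset[OF anti]) auto
  also have "\<dots> < (m - a) * f a + (b - m) * f a"
    using m monotone_onD[OF mono, of a m] by simp
  finally show ?thesis by (simp add: algebra_simps)
qed

text \<open>Left half of the Hermite--Hadamard inequality; the linear part of the tangent
  integrates to zero over an interval symmetric about \<open>m\<close>.\<close>
lemma midpoint_tangent_le_integral:
  fixes f :: "real \<Rightarrow> real" and a b c :: real
  defines "m \<equiv> (a + b) / 2"
  assumes "a \<le> b" and int: "f integrable_on {a..b}"
    and tangent: "\<And>u. u \<in> {a..b} \<Longrightarrow> f m + c * (u - m) \<le> f u"
  shows "(b - a) * f m \<le> integral {a..b} f"
proof -
  have "((\<lambda>u. u - m) has_integral (b - m)\<^sup>2 / 2 - (a - m)\<^sup>2 / 2) {a..b}"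
  proof (rule fundamental_theorem_of_calculus[OF \<open>a \<le> b\<close>])
    fix x assume "x \<in> {a..b}"
    show "((\<lambda>u. (u - m)\<^sup>2 / 2) has_vector_derivative x - m) (at x within {a..b})"
      by (auto intro!: derivative_eq_intros
               simp: has_real_derivative_iff_has_vector_derivative[symmetric])
  qed
  moreover have "(b - m)\<^sup>2 / 2 - (a - m)\<^sup>2 / 2 = 0"
    by (simp add: m_def power2_eq_square field_simps)
  ultimately have "((\<lambda>u. u - m) has_integral 0) {a..b}" by simp
  from has_integral_mult_right[OF this, of c]
  have "((\<lambda>u. c * (u - m)) has_integral 0) {a..b}" by simp
  from has_integral_add[OF has_integral_const_real[of "f m" a b] this]
  have "((\<lambda>u. f m + c * (u - m)) has_integral (b - a) * f m) {a..b}"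
    using \<open>a \<le> b\<close> by simp
  from has_integral_le[OF this integrable_integral[OF int] tangent]
  show ?thesis .
qed

lemma recip_ln_integrable:
  fixes a b :: real
  assumes "1 < a" "a \<le> b"
  shows "(\<lambda>u. 1 / ln u) integrable_on {a..b}"
  using has_integral_recip_ln_above_1[OF assms] by (rule has_integral_integrable)

lemma strict_antimono_recip_ln: "strict_antimono_on {1<..} (\<lambda>u::real. 1 / ln u)"
  by (auto intro!: monotone_onI divide_strict_left_mono)

lemma recip_ln_above_tangent:
  fixes x y :: real
  assumes "1 < x" "1 < y"
  shows "1 / ln x + (- 1 / (x * (ln x)\<^sup>2)) * (y - x) \<le> 1 / ln y"
proof -
  have "(- 1 / (x * (ln x)\<^sup>2)) * (y - x) \<le> 1 / ln y - 1 / ln x"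
  proof (rule f''_imp_f'[of "{1<..}" "\<lambda>u. 1 / ln u" "\<lambda>u. - 1 / (u * (ln u)\<^sup>2)"
                           "\<lambda>u. (ln u + 2) / (u\<^sup>2 * (ln u) ^ 3)"])
    fix z :: real assume "z \<in> {1<..}"
    then have "1 < z" "0 < ln z" by auto
    then show "DERIV (\<lambda>u. 1 / ln u) z :> - 1 / (z * (ln z)\<^sup>2)"
      and "DERIV (\<lambda>u. - 1 / (u * (ln u)\<^sup>2)) z :> (ln z + 2) / (z\<^sup>2 * (ln z) ^ 3)"
      and "0 \<le> (ln z + 2) / (z\<^sup>2 * (ln z) ^ 3)"
      by (auto intro!: derivative_eq_intros simp: field_simps power2_eq_square power3_eq_cube)
  qed (use assms in auto)
  then show ?thesis by simp
qed

lemma recip_ln_integral_bounds: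
  fixes a b :: real
  assumes "1 < a" "a \<le> b"
  shows "(b - a) / ln ((a + b) / 2) \<le> integral {a..b} (\<lambda>u. 1 / ln u)"
    and "integral {a..b} (\<lambda>u. 1 / ln u) \<le> (b - a) / ln a"
proof -
  have anti: "strict_antimono_on {a..b} (\<lambda>u. 1 / ln u)"
    using assms by (intro monotone_on_subset[OF strict_antimono_recip_ln]) auto
  have "(b - a) * (1 / ln ((a + b) / 2)) \<le> integral {a..b} (\<lambda>u. 1 / ln u)"
    by (rule midpoint_tangent_le_integral[OF assms(2) recip_ln_integrable[OF assms]],
        rule recip_ln_above_tangent) (use assms in auto)
  then show "(b - a) / ln ((a + b) / 2) \<le> integral {a..b} (\<lambda>u. 1 / ln u)" by simp
  show "integral {a..b} (\<lambda>u. 1 / ln u) \<le> (b - a) / ln a"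
    using antimono_on_integral_le[OF _ recip_ln_integrable[OF assms] assms(2)] anti
    by (simp add: strict_antimono_iff_antimono)
qed

lemma recip_ln_integral_less:
  fixes a b :: real
  assumes "1 < a" "a < b"
  shows "integral {a..b} (\<lambda>u. 1 / ln u) < (b - a) / ln a"
  using strict_antimono_on_integral_less[OF _ recip_ln_integrable] assms
    monotone_on_subset[OF strict_antimono_recip_ln, of "{a..b}"]
  by fastforce

lemma recip_ln_integral_pos:
  fixes a b :: real
  assumes "1 < a" "a < b"
  shows "0 < integral {a..b} (\<lambda>u. 1 / ln u)"
proof -
  have "0 < (b - a) / ln ((a + b) / 2)" using assms by auto
  then show ?thesis using recip_ln_integral_bounds(1)[of a b] assms by linarith
qed

lemma li_strict_mono_above_1: "1 < a \<Longrightarrow> a < b \<Longrightarrow> li a < li b"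
  using li_diff_eq_integral[of a b] recip_ln_integral_pos[of a b] by auto

text \<open>\<open>li\<close> is negative at \<open>1 + e\<^sup>-\<^sup>3\<close> and positive at 3, already by the crude bounds
  \<open>0 \<le> li_remainder \<le> 1\<close>.\<close>
lemma li_has_zero_above_1: "\<exists>z>1. li z = 0"
proof -
  define L where "L x = integral {0..1} li_remainder + integral {1..x} li_remainder + ln (x - 1)"
    for x
  define a :: real where "a = 1 + exp (- 3)"
  have "exp (- 3 :: real) < 1" by simp
  then have a: "1 < a" "a \<le> 3" "ln (a - 1) = - 3"
    unfolding a_def by (simp, linarith, simp)
  have "continuous_on {1..3} (\<lambda>x. integral {1..x} li_remainder)"
    by (intro indefinite_integral_continuous_1 li_remainder_integrable) simp
  then have "continuous_on {a..3} (\<lambda>x. integral {1..x} li_remainder)"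
    by (rule continuous_on_subset) (use a in auto)
  moreover have "continuous_on {a..3} (\<lambda>x. ln (x - 1))"
    using a by (intro continuous_intros) auto
  ultimately have "continuous_on {a..3} L"
    unfolding L_def by (intro continuous_on_add continuous_on_const)
  moreover have "L a \<le> 0"
    using li_remainder_integral_bounds[of 0 1] li_remainder_integral_bounds[of 1 a] a
    unfolding L_def by linarith
  moreover have "0 \<le> L 3"
    using li_remainder_integral_bounds[of 0 1] li_remainder_integral_bounds[of 1 3]
      ln_ge_zero[of "3 - 1 :: real"]
    unfolding L_def by linarith
  ultimately obtain z where "a \<le> z" "z \<le> 3" "L z = 0"
    using IVT'[of L a 0 3] a(2) by blast
  moreover from this have "li z = 0" using a li_eq_regularised[of z] by (simp add: L_def)
  ultimately show ?thesis using a(1) by (intro exI[of _ z]) auto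
qed

lemma soldner_mu_gt_1: "1 < soldner_mu"
  and li_soldner_mu: "li soldner_mu = 0"
proof -
  have "\<exists>!x. 1 < x \<and> li x = 0"
  proof (rule ex_ex1I)
    show "\<exists>x. 1 < x \<and> li x = 0" using li_has_zero_above_1 by blast
    fix x y assume "1 < x \<and> li x = 0" "1 < y \<and> li y = 0"
    then show "x = y"
      using li_strict_mono_above_1[of x y] li_strict_mono_above_1[of y x]
      by (cases x y rule: linorder_cases) auto
  qed
  from theI'[OF this] show "1 < soldner_mu" "li soldner_mu = 0"
    unfolding soldner_mu_def by auto
qed

lemma li_eq_integral_from_soldner_mu:
  "soldner_mu \<le> x \<Longrightarrow> li x = integral {soldner_mu..x} (\<lambda>u. 1 / ln u)"
  using li_diff_eq_integral[OF soldner_mu_gt_1, of x] unfolding li_soldner_mu by linarith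

lemma li_bounds_above_soldner_mu:
  assumes "soldner_mu \<le> x"
  shows "(x - soldner_mu) / ln ((soldner_mu + x) / 2) \<le> li x"
    and "li x \<le> (x - soldner_mu) / ln soldner_mu"
  using recip_ln_integral_bounds[OF soldner_mu_gt_1 assms] li_eq_integral_from_soldner_mu[OF assms]
  by simp_all

lemma li_less_above_soldner_mu:
  assumes "soldner_mu < x"
  shows "li x < (x - soldner_mu) / ln soldner_mu"
  using recip_ln_integral_less[OF soldner_mu_gt_1 assms] li_eq_integral_from_soldner_mu assms
  by simp

lemma scaled_ceiling_bounds:
  fixes \<mu> t r R :: real
  assumes "0 < \<mu>" "r = \<mu> * exp (- t)" "R = real_of_int \<lceil>r\<rceil>"
  shows "0 \<le> R - r" "R - r < 1" "exp t * R - \<mu> = exp t * (R - r)"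
    and "\<mu> \<le> exp t * R" "exp t * R < \<mu> + exp t"
    and "ln (exp t * R) = t + ln R" "ln ((\<mu> + exp t * R) / 2) = t + ln ((R + r) / 2)"
proof -
  have r: "0 < r" "exp t * r = \<mu>" using assms by (simp_all add: exp_minus)
  show R: "0 \<le> R - r" "R - r < 1" using assms(3) ceiling_correct[of r] by auto
  show diff: "exp t * R - \<mu> = exp t * (R - r)" using r by (simp add: algebra_simps)
  have "0 \<le> exp t * (R - r)" "exp t * (R - r) < exp t * 1"
    using R by (simp_all only: mult_nonneg_nonneg exp_ge_zero mult_strict_left_mono exp_gt_zero)
  then show "\<mu> \<le> exp t * R" "exp t * R < \<mu> + exp t" using diff by linarith+
  show "ln (exp t * R) = t + ln R" using r R by (simp add: ln_mult_pos)
  have "ln ((\<mu> + exp t * R) / 2) = ln (exp t * ((R + r) / 2))"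
    using r by (intro arg_cong[of _ _ ln]) (simp add: algebra_simps)
  also have "\<dots> = t + ln ((R + r) / 2)" using r R by (subst ln_mult_pos) auto
  finally show "ln ((\<mu> + exp t * R) / 2) = t + ln ((R + r) / 2)" .
qed

theorem corollary3p12:
  fixes t r R :: real
  assumes "r = soldner_mu * exp (- t)"
      and "R = real_of_int \<lceil>r\<rceil>"
  shows "0 \<le> li (exp t * R) / exp t
       \<and> li (exp t * R) / exp t < li (soldner_mu + exp t) / exp t
       \<and> li (soldner_mu + exp t) / exp t < 1 / ln soldner_mu
       \<and> 0 \<le> (R - r) / (t + ln R)
       \<and> (R - r) / (t + ln R) \<le> (R - r) / (t + ln ((R + r) / 2))
       \<and> (R - r) / (t + ln ((R + r) / 2)) \<le> li (exp t * R) / exp t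
       \<and> li (exp t * R) / exp t \<le> (R - r) / ln soldner_mu
       \<and> (R - r) / ln soldner_mu < 1 / ln soldner_mu"
proof -
  let ?\<mu> = soldner_mu and ?X = "exp t * R"
  have \<mu>: "1 < ?\<mu>" "0 < ln ?\<mu>" using soldner_mu_gt_1 by simp_all
  note scaled = scaled_ceiling_bounds[OF less_trans[OF zero_less_one soldner_mu_gt_1] assms]
  have ln_mid: "ln ?\<mu> \<le> ln ((?\<mu> + ?X) / 2)" "ln ((?\<mu> + ?X) / 2) \<le> ln ?X"
    using scaled(4) \<mu> by (simp_all add: mult.commute)
  have "(R - r) / ln ((?\<mu> + ?X) / 2) \<le> li ?X / exp t"
    using li_bounds_above_soldner_mu(1)[OF scaled(4)] scaled(3) ln_mid \<mu>
    by (simp add: field_simps)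
  moreover have "li ?X / exp t \<le> (R - r) / ln ?\<mu>"
    using li_bounds_above_soldner_mu(2)[OF scaled(4)] scaled(3) \<mu>
    by (simp add: field_simps)
  moreover have "li ?X / exp t < li (?\<mu> + exp t) / exp t"
    using li_strict_mono_above_1[OF _ scaled(5)] scaled(4) \<mu> by (simp add: divide_strict_right_mono)
  moreover have "li (?\<mu> + exp t) / exp t < 1 / ln ?\<mu>"
    using li_less_above_soldner_mu[of "?\<mu> + exp t"] \<mu> by (simp add: field_simps)
  moreover have "(R - r) / ln ?X \<le> (R - r) / ln ((?\<mu> + ?X) / 2)"
    using ln_mid \<mu> scaled(1) by (intro divide_left_mono mult_pos_pos; linarith)
  moreover have "0 \<le> (R - r) / ln ?X"
    using ln_mid \<mu> scaled(1) by (intro divide_nonneg_pos; linarith)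
  moreover have "(R - r) / ln ?\<mu> < 1 / ln ?\<mu>" using scaled(2) \<mu> by (simp add: divide_strict_right_mono)
  ultimately show ?thesis unfolding scaled(6,7) by linarith
qed

end
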